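(* For the $n$-dimensional rigid body with a flat face rubber-rolling on a sphere (as in the context), with $n\ge3$, the gyroscopic coefficients in the coordinates $(s_1,\dots,s_{n-1})$ on $S=\mathbb R^{n-1}$ are: (C1) if $\mathbb J=\mathrm{diag}(J_1,J_2,\dots,J_n)$ and $a=0$, then $C_{ij}^k=0$ for all $i,j,k\in\{1,\dots,n-1\}$; (C2) if $\mathbb J=\mathrm{diag}(J_1,\dots,J_1,J_n)$, then $$C_{ij}^k=\frac{-ma}{R(J_1+J_n+ma^2)}\big(s_i\delta_j^k-s_j\delta_i^k\big),\qquad 1\le i,j,k\le n-1.$$
   Context: Fix $n\ge3$, $R>0$, $a\in\mathbb R$, $m>0$ and a symmetric positive definite $n\times n$ matrix $\mathbb J$ (mass tensor). Let $E_1,\dots,E_n$ be the standard basis of $\mathbb R^n$ and, for $u,v\in\mathbb R^n$, $u\wedge v=uv^T-vu^T\in\mathfrak{so}(n)$. The configuration space is $Q=\mathbb R^{n-1}\times SO(n)$ with points $((X_1,\dots,X_{n-1}),g)$; set $X=(X_1,\dots,X_{n-1},R+a)^T\in\mathbb R^n$ (so $\dot X_n=0$) and $\Omega=g^{-1}\dot g\in\mathfrak{so}(n)$. The Lagrangian is $L=\frac12(\mathbb I\Omega,\Omega)_\kappa+\frac m2\|\dot X+\Omega X\|^2$, where $\mathbb I(\Omega)=\mathbb J\Omega+\Omega\mathbb J$, $(\xi,\eta)_\kappa=-\frac12\mathrm{tr}(\xi\eta)$ and $\|\cdot\|$ is the Euclidean norm; this defines the kinetic energy metric $\langle\cdot,\cdot\rangle$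 on $Q$ (no potential). The constraints are the rolling constraint $\dot X=-R\,\Omega E_n$ and the no-spin constraint $\Omega_{\mu\nu}=0$ for $1\le\mu,\nu\le n-1$; together they are equivalent to $\Omega=-\frac1R\dot X\wedge E_n$ with $\dot X\in\mathbb R^{n-1}\times\{0\}$, and define the distribution $\mathcal D\subset TQ$. $SO(n)$ acts on $Q$ by $h\cdot(X,g)=(X,hg)$, making this an $SO(n)$-Chaplygin system (free proper isometric action, $\mathcal D$ invariant, $T_qQ=\mathcal D_q\oplus\mathfrak{so}(n)\cdot q$) with shape space $S=\mathbb R^{n-1}$ and global coordinates $s_i=X_i$, $i=1,\dots,n-1$. The horizontal lift $\mathrm{hor}_q(\partial_{s_i})$ is the vector in $\mathcal D_q$ projecting to $\partial_{s_i}$; with $K_{kl}=\langle\mathrm{hor}_q\partial_{s_k},\mathrm{hor}_q\partial_{s_l}\rangle$ and inverse $K^{kl}$, the gyroscopic coefficients are $C_{ij}^k=\sum_lK^{kl}\langle[\mathrm{hor}_q\partial_{s_i},\mathrm{hor}_q\partial_{s_j}],\mathrm{hor}_q\partial_{s_l}\rangle_q$ (Lie bracket of vector fields on $Q$). *)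

theory Defs
  imports "HOL-Analysis.Analysis"
begin

definition lastI :: "'n::{finite,linorder}" where
  "lastI = Max UNIV"

definition shapeI :: "'n::{finite,linorder} set" where
  "shapeI = UNIV - {lastI}"

definition skew :: "real^'n^'n \<Rightarrow> bool" where
  "skew A \<longleftrightarrow> transpose A = - A"

definition wedge :: "real^'n \<Rightarrow> real^'n \<Rightarrow> real^'n^'n" where
  "wedge u v = (\<chi> i j. u$i * v$j - v$i * u$j)"

definition pos_def_sym :: "real^'n^'n \<Rightarrow> bool" where
  "pos_def_sym J \<longleftrightarrow> transpose J = J \<and> (\<forall>v. v \<noteq> 0 \<longrightarrow> v \<bullet> (J *v v) > 0)"

definition inertia :: "real^'n^'n \<Rightarrow> real^'n^'n \<Rightarrow> real^'n^'n" where
  "inertia J \<Omega> = J ** \<Omega> + \<Omega> ** J"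

definition kappa :: "real^'n^'n \<Rightarrow> real^'n^'n \<Rightarrow> real" where
  "kappa \<xi> \<eta> = - (1/2) * trace (\<xi> ** \<eta>)"

text \<open>Ambient space of Q: pairs (x, g) with x \<in> R^n (last coordinate 0 on Q
  encoding (X_1..X_{n-1})) and g an n\<times>n matrix. Q itself:\<close>

definition Qspace :: "(((real,'n::{finite,linorder}) vec) \<times> ((real,'n) vec,'n) vec) set" where
  "Qspace = {(x, g). x $ lastI = 0 \<and> rotation_matrix g}"

definition posX :: "real \<Rightarrow> real \<Rightarrow> (real,'n::{finite,linorder}) vec \<Rightarrow> (real,'n) vec" where
  "posX R a x = (\<chi> i. if i = lastI then R + a else x $ i)"

definition bodyOmega :: "real^'n^'n \<Rightarrow> real^'n^'n \<Rightarrow> real^'n^'n" where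
  "bodyOmega g gd = matrix_inv g ** gd"

definition lagr :: "real \<Rightarrow> real \<Rightarrow> real \<Rightarrow> ((real,'n::{finite,linorder}) vec,'n) vec
      \<Rightarrow> ((real,'n) vec \<times> ((real,'n) vec,'n) vec) \<Rightarrow> ((real,'n) vec \<times> ((real,'n) vec,'n) vec) \<Rightarrow> real" where
  "lagr R a m J q v =
     (let \<Omega> = bodyOmega (snd q) (snd v)
      in (1/2) * kappa (inertia J \<Omega>) \<Omega>
         + (m/2) * (norm (fst v + \<Omega> *v posX R a (fst q)))\<^sup>2)"

text \<open>Kinetic energy metric: the symmetric bilinear form with L(v) = 1/2 <v,v>.\<close>
definition kmetric :: "real \<Rightarrow> real \<Rightarrow> real \<Rightarrow> ((real,'n::{finite,linorder}) vec,'n) vec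
      \<Rightarrow> ((real,'n) vec \<times> ((real,'n) vec,'n) vec) \<Rightarrow> ((real,'n) vec \<times> ((real,'n) vec,'n) vec)
      \<Rightarrow> ((real,'n) vec \<times> ((real,'n) vec,'n) vec) \<Rightarrow> real" where
  "kmetric R a m J q v w = lagr R a m J q (v + w) - lagr R a m J q v - lagr R a m J q w"

text \<open>Constraint distribution: rolling (Xdot = -R \<Omega> E_n) and no-spin
  (\<Omega>_{\<mu>\<nu>} = 0 for \<mu>,\<nu> < n), with \<Omega> = g^{-1} gdot in so(n) and Xdot_n = 0.\<close>
definition distD :: "real \<Rightarrow> ((real,'n::{finite,linorder}) vec \<times> ((real,'n) vec,'n) vec)
      \<Rightarrow> ((real,'n) vec \<times> ((real,'n) vec,'n) vec) set" where
  "distD R q = {(xd, gd). xd $ lastI = 0 \<and>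
      skew (bodyOmega (snd q) gd) \<and>
      xd = - R *s (bodyOmega (snd q) gd *v axis lastI 1) \<and>
      (\<forall>\<mu> \<nu>. \<mu> \<noteq> lastI \<longrightarrow> \<nu> \<noteq> lastI \<longrightarrow> bodyOmega (snd q) gd $ \<mu> $ \<nu> = 0)}"

text \<open>Horizontal lift of \<partial>_{s_i}: the vector in D_q projecting to \<partial>_{s_i}
  (the projection Q \<rightarrow> S is (x,g) \<mapsto> x).\<close>
definition horL :: "real \<Rightarrow> 'n::{finite,linorder}
      \<Rightarrow> ((real,'n) vec \<times> ((real,'n) vec,'n) vec) \<Rightarrow> ((real,'n) vec \<times> ((real,'n) vec,'n) vec)" where
  "horL R i q = (THE v. v \<in> distD R q \<and> fst v = axis i 1)"

text \<open>Lie bracket of vector fields, computed in the ambient (open) vector space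
  containing Q: [V,W](p) = DW(p)(V p) - DV(p)(W p).\<close>
definition lie_bracket :: "('a::real_normed_vector \<Rightarrow> 'a) \<Rightarrow> ('a \<Rightarrow> 'a) \<Rightarrow> 'a \<Rightarrow> 'a" where
  "lie_bracket V W p = frechet_derivative W (at p) (V p) - frechet_derivative V (at p) (W p)"

definition Kmat :: "real \<Rightarrow> real \<Rightarrow> real \<Rightarrow> ((real,'n::{finite,linorder}) vec,'n) vec
      \<Rightarrow> ((real,'n) vec \<times> ((real,'n) vec,'n) vec) \<Rightarrow> 'n \<Rightarrow> 'n \<Rightarrow> real" where
  "Kmat R a m J q k l = kmetric R a m J q (horL R k q) (horL R l q)"

definition Kinv :: "real \<Rightarrow> real \<Rightarrow> real \<Rightarrow> ((real,'n::{finite,linorder}) vec,'n) vec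
      \<Rightarrow> ((real,'n) vec \<times> ((real,'n) vec,'n) vec) \<Rightarrow> 'n \<Rightarrow> 'n \<Rightarrow> real" where
  "Kinv R a m J q = (THE M. (\<forall>k l. (k \<notin> shapeI \<or> l \<notin> shapeI) \<longrightarrow> M k l = 0) \<and>
      (\<forall>k\<in>shapeI. \<forall>j\<in>shapeI.
         (\<Sum>l\<in>shapeI. M k l * Kmat R a m J q l j) = (if k = j then 1 else 0)))"

definition gyro :: "real \<Rightarrow> real \<Rightarrow> real \<Rightarrow> ((real,'n::{finite,linorder}) vec,'n) vec
      \<Rightarrow> ((real,'n) vec \<times> ((real,'n) vec,'n) vec) \<Rightarrow> 'n \<Rightarrow> 'n \<Rightarrow> 'n \<Rightarrow> real" where
  "gyro R a m J q i j k =
     (\<Sum>l\<in>shapeI. Kinv R a m J q k l *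
        kmetric R a m J q (lie_bracket (horL R i) (horL R j) q) (horL R l q))"

end

theory Submission
  imports Defs
begin

text \<open>The horizontal lift of \<open>\<partial>\<^sub>s\<^sub>i\<close> is the left-invariant field
  \<open>(E\<^sub>i, g \<Omega>\<^sub>i)\<close> with \<open>\<Omega>\<^sub>i = -(1/R) E\<^sub>i \<and> E\<^sub>n\<close>, so the bracket of two lifts is the
  vertical left-invariant field with body velocity \<open>[\<Omega>\<^sub>i, \<Omega>\<^sub>j] = -(1/R\<^sup>2) E\<^sub>i \<and> E\<^sub>j\<close>.
  For diagonal \<open>J\<close> its inertia pairing with every \<open>\<Omega>\<^sub>l\<close> vanishes, and only the
  translational term \<open>m a (\<delta>\<^sub>l\<^sub>i s\<^sub>j - \<delta>\<^sub>l\<^sub>j s\<^sub>i) / R\<^sup>3\<close> survives; hence all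
  coefficients vanish when \<open>a = 0\<close>. For \<open>J = diag(J\<^sub>1, \<dots>, J\<^sub>1, J\<^sub>n)\<close> the metric
  matrix is \<open>K = \<alpha> I + \<beta> s s\<^sup>T\<close>, inverted by Sherman--Morrison, and the rank-one
  part of \<open>K\<^sup>-\<^sup>1\<close> drops out by antisymmetry in \<open>i, j\<close>. The argument works for every
  \<open>n \<ge> 2\<close>.\<close>

abbreviation diag_mat :: "('n::finite \<Rightarrow> real) \<Rightarrow> real^'n^'n" where
  "diag_mat d \<equiv> \<chi> i j. if i = j then d i else 0"

lemma matrix_add_rdistrib: "((A::real^'n::finite^'m) + B) ** C = A ** C + B ** C"
  by (simp add: vec_eq_iff matrix_matrix_mult_def sum.distrib distrib_right)

lemma matrix_diff_ldistrib: "(A::real^'n::finite^'m) ** (B - C) = A ** B - A ** C"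
  by (simp add: vec_eq_iff matrix_matrix_mult_def sum_subtractf right_diff_distrib)

lemma kappa_inertia_commute: "kappa (inertia J A) B = kappa (inertia J B) (A::real^'n^'n)"
proof -
  have "trace (J ** B ** A) = trace (A ** J ** B)" "trace (B ** J ** A) = trace (J ** A ** B)"
    by (metis matrix_mul_assoc trace_mul_sym)+
  then show ?thesis
    by (simp add: kappa_def inertia_def matrix_add_rdistrib trace_add)
qed

lemma kappa_inertia_add_left:
  "kappa (inertia J (A + B)) C = kappa (inertia J A) C + kappa (inertia J B) (C::real^'n^'n)"
  by (simp add: kappa_def inertia_def matrix_add_ldistrib matrix_add_rdistrib trace_add algebra_simps)

lemma kappa_inertia_add_right:
  "kappa (inertia J C) (A + B) = kappa (inertia J C) A + kappa (inertia J C) (B::real^'n^'n)"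
  by (simp add: kappa_def inertia_def matrix_add_ldistrib matrix_add_rdistrib trace_add algebra_simps)

lemma kmetric_eq:
  "kmetric R a m J q v w =
     kappa (inertia J (bodyOmega (snd q) (snd v))) (bodyOmega (snd q) (snd w))
     + m * ((fst v + bodyOmega (snd q) (snd v) *v posX R a (fst q)) \<bullet>
            (fst w + bodyOmega (snd q) (snd w) *v posX R a (fst q)))"
proof -
  define Ov Ow X where "Ov = bodyOmega (snd q) (snd v)" and "Ow = bodyOmega (snd q) (snd w)"
    and "X = posX R a (fst q)"
  have O: "bodyOmega (snd q) (snd (v + w)) = Ov + Ow"
    by (simp add: Ov_def Ow_def bodyOmega_def matrix_add_ldistrib)
  have "fst (v + w) + (Ov + Ow) *v X = (fst v + Ov *v X) + (fst w + Ow *v X)"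
    by (simp add: matrix_vector_mult_add_rdistrib algebra_simps)
  then have N: "(norm (fst (v + w) + (Ov + Ow) *v X))\<^sup>2
      = (norm (fst v + Ov *v X))\<^sup>2 + (norm (fst w + Ow *v X))\<^sup>2
        + 2 * ((fst v + Ov *v X) \<bullet> (fst w + Ow *v X))"
    by (simp add: power2_norm_eq_inner inner_add inner_commute algebra_simps)
  have K: "kappa (inertia J (Ov + Ow)) (Ov + Ow)
      = kappa (inertia J Ov) Ov + kappa (inertia J Ow) Ow + 2 * kappa (inertia J Ov) Ow"
    using kappa_inertia_commute[of J Ow Ov]
    by (simp add: kappa_inertia_add_left kappa_inertia_add_right)
  show ?thesis
    unfolding kmetric_def lagr_def Let_def O Ov_def[symmetric] Ow_def[symmetric] X_def[symmetric] N K
    by (simp add: algebra_simps)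
qed

lemma diag_mat_mult: "diag_mat d ** A = (\<chi> r c. d r * A $ r $ c)"
proof -
  have "(\<Sum>k\<in>UNIV. (if r = k then d r else 0) * A $ k $ c) = d r * A $ r $ c" for r c
    by (subst sum.cong[OF refl, of _ _ "\<lambda>k. if k = r then d r * A $ k $ c else 0"]) auto
  then show ?thesis by (simp add: matrix_matrix_mult_def)
qed

lemma mult_diag_mat: "A ** diag_mat d = (\<chi> r c. A $ r $ c * d c)"
proof -
  have "(\<Sum>k\<in>UNIV. A $ r $ k * (if k = c then d k else 0)) = A $ r $ c * d c" for r c
    by (subst sum.cong[OF refl, of _ _ "\<lambda>k. if k = c then A $ r $ k * d k else 0"]) auto
  then show ?thesis by (simp add: matrix_matrix_mult_def)
qed

lemma kappa_inertia_diag: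
  "kappa (inertia (diag_mat d) A) B
     = -(1/2) * (\<Sum>r\<in>UNIV. \<Sum>c\<in>UNIV. B $ c $ r * ((d r + d c) * A $ r $ c))"
  unfolding kappa_def inertia_def diag_mat_mult mult_diag_mat
  by (simp add: trace_def matrix_matrix_mult_def algebra_simps sum.distrib sum_distrib_left)

lemma pos_def_sym_diag_pos:
  assumes "pos_def_sym (diag_mat d)"
  shows "d i > 0"
proof -
  have "axis i (1::real) \<noteq> 0"
    by (simp add: axis_eq_0_iff)
  then have "0 < axis i 1 \<bullet> (diag_mat d *v axis i 1)"
    using assms unfolding pos_def_sym_def by blast
  also have "(diag_mat d *v axis i 1) $ i = d i"
    unfolding matrix_vector_mult_def vec_lambda_beta
    by (subst sum.cong[OF refl, of _ _ "\<lambda>c. if c = i then d i else 0"]) (auto simp: axis_def)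
  then have "axis i 1 \<bullet> (diag_mat d *v axis i 1) = d i"
    by (simp add: inner_axis')
  finally show ?thesis .
qed

text \<open>The rolling and no-spin constraints give \<open>\<Omega> = -(1/R) dX \<and> E\<^sub>n\<close>; here
  \<open>dX = E\<^sub>i\<close>.\<close>

definition hor_omega :: "real \<Rightarrow> 'n::{finite,linorder} \<Rightarrow> ((real,'n) vec,'n) vec" where
  "hor_omega R i = - (1/R) *\<^sub>R wedge (axis i 1) (axis lastI 1)"

lemma hor_omega_nth:
  "hor_omega R i $ r $ c
     = (if r = i \<and> c = lastI then -1/R else 0) + (if r = lastI \<and> c = i then 1/R else 0)"
  by (auto simp: hor_omega_def wedge_def axis_def)

lemma sum_hor_omega_row:
  "(\<Sum>k\<in>UNIV. hor_omega R i $ r $ k * f k)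
     = (if r = i then -(1/R) * f lastI else 0) + (if r = lastI then f i / R else 0)"
proof -
  have "(\<Sum>k\<in>UNIV. hor_omega R i $ r $ k * f k)
      = (\<Sum>k\<in>UNIV. (if k = lastI then (if r = i then -(1/R) * f k else 0) else 0)
                  + (if k = i then (if r = lastI then f k / R else 0) else 0))"
    by (rule sum.cong) (auto simp: hor_omega_nth)
  then show ?thesis
    by (simp add: sum.distrib)
qed

lemma sum_hor_omega_col:
  "(\<Sum>c\<in>UNIV. hor_omega R l $ c $ r * g c)
     = (if r = lastI then -(1/R) * g l else 0) + (if r = l then g lastI / R else 0)"
proof -
  have "(\<Sum>c\<in>UNIV. hor_omega R l $ c $ r * g c)
      = (\<Sum>c\<in>UNIV. (if c = l then (if r = lastI then -(1/R) * g c else 0) else 0)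
                  + (if c = lastI then (if r = l then g c / R else 0) else 0))"
    by (rule sum.cong) (auto simp: hor_omega_nth)
  then show ?thesis
    by (simp add: sum.distrib)
qed

lemma hor_omega_mult_nth:
  assumes "i \<noteq> lastI" "j \<noteq> lastI"
  shows "(hor_omega R i ** hor_omega R j) $ r $ c
     = (if r = i \<and> c = j then -1/R^2 else 0) + (if r = lastI \<and> c = lastI \<and> i = j then -1/R^2 else 0)"
  using assms
  by (simp add: matrix_matrix_mult_def sum_hor_omega_row) (auto simp: hor_omega_nth power2_eq_square)

definition hor_bracket :: "real \<Rightarrow> 'n::{finite,linorder} \<Rightarrow> 'n \<Rightarrow> ((real,'n) vec,'n) vec" where
  "hor_bracket R i j = hor_omega R i ** hor_omega R j - hor_omega R j ** hor_omega R i"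

lemma hor_bracket_nth:
  assumes "i \<noteq> lastI" "j \<noteq> lastI"
  shows "hor_bracket R i j $ r $ c
     = (if r = i \<and> c = j then -1/R^2 else 0) - (if r = j \<and> c = i then -1/R^2 else 0)"
  using assms by (auto simp: hor_bracket_def hor_omega_mult_nth)

lemma kappa_inertia_diag_hor_omega:
  assumes "k \<noteq> lastI" "l \<noteq> lastI" "R \<noteq> 0"
  shows "kappa (inertia (diag_mat d) (hor_omega R k)) (hor_omega R l)
     = (if k = l then (d k + d lastI) / R^2 else 0)"
  using assms
  by (simp add: kappa_inertia_diag sum_hor_omega_col sum.distrib)
     (auto simp: hor_omega_nth power2_eq_square field_simps)

lemma kappa_inertia_diag_hor_bracket:
  assumes "i \<noteq> lastI" "j \<noteq> lastI" "l \<noteq> lastI"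
  shows "kappa (inertia (diag_mat d) (hor_bracket R i j)) (hor_omega R l) = 0"
  using assms
  by (simp add: kappa_inertia_diag sum_hor_omega_col sum.distrib) (auto simp: hor_bracket_nth)

lemma hor_velocity_nth:
  assumes "k \<noteq> lastI" "R \<noteq> 0"
  shows "(axis k 1 + hor_omega R k *v posX R a x) $ r
     = (if r = k then -a/R else 0) + (if r = lastI then x$k/R else 0)"
  using assms
  by (simp add: matrix_vector_mult_def sum_hor_omega_row) (auto simp: axis_def posX_def field_simps)

lemma hor_bracket_posX_nth:
  assumes "i \<noteq> lastI" "j \<noteq> lastI"
  shows "(hor_bracket R i j *v posX R a x) $ r
     = (if r = i then - x$j/R^2 else 0) + (if r = j then x$i/R^2 else 0)"
proof -
  have "(hor_bracket R i j *v posX R a x) $ r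
      = (\<Sum>c\<in>UNIV. (if c = j then (if r = i then - x$j/R^2 else 0) else 0)
                  + (if c = i then (if r = j then x$i/R^2 else 0) else 0))"
    unfolding matrix_vector_mult_def vec_lambda_beta using assms
    by (intro sum.cong refl) (auto simp: hor_bracket_nth posX_def)
  then show ?thesis
    by (simp add: sum.distrib)
qed

lemma sum_two_points_mult:
  fixes p1 :: "'n::finite"
  shows "(\<Sum>r\<in>UNIV. ((if r = p1 then a1 else 0) + (if r = p2 then a2 else 0))
                   * ((if r = p3 then b3 else 0) + (if r = p4 then b4 else (0::real))))
   = (if p1 = p3 then a1 * b3 else 0) + (if p1 = p4 then a1 * b4 else 0)
     + (if p2 = p3 then a2 * b3 else 0) + (if p2 = p4 then a2 * b4 else 0)"
proof -
  have "(\<Sum>r\<in>UNIV. ((if r = p1 then a1 else 0) + (if r = p2 then a2 else 0))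
                   * ((if r = p3 then b3 else 0) + (if r = p4 then b4 else (0::real))))
    = (\<Sum>r\<in>UNIV. (if r = p1 then (if p1 = p3 then a1 * b3 else 0) + (if p1 = p4 then a1 * b4 else 0) else 0)
        + (if r = p2 then (if p2 = p3 then a2 * b3 else 0) + (if p2 = p4 then a2 * b4 else 0) else 0))"
    by (rule sum.cong) (auto simp: algebra_simps)
  then show ?thesis
    by (simp add: sum.distrib)
qed

lemma inner_hor_velocity:
  assumes "k \<noteq> lastI" "l \<noteq> lastI" "R \<noteq> 0"
  shows "(axis k 1 + hor_omega R k *v posX R a x) \<bullet> (axis l 1 + hor_omega R l *v posX R a x)
    = (if k = l then a^2/R^2 else 0) + x$k * x$l / R^2"
  unfolding inner_vec_def hor_velocity_nth[OF assms(1,3)] hor_velocity_nth[OF assms(2,3)]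
    inner_real_def sum_two_points_mult
  using assms by (simp add: power2_eq_square)

lemma inner_hor_bracket_hor_velocity:
  assumes "i \<noteq> lastI" "j \<noteq> lastI" "l \<noteq> lastI" "R \<noteq> 0"
  shows "(hor_bracket R i j *v posX R a x) \<bullet> (axis l 1 + hor_omega R l *v posX R a x)
    = (if l = i then a * x$j / R^3 else 0) - (if l = j then a * x$i / R^3 else 0)"
  unfolding inner_vec_def hor_velocity_nth[OF assms(3,4)] hor_bracket_posX_nth[OF assms(1,2)]
    inner_real_def sum_two_points_mult
  using assms by (auto simp: power2_eq_square power3_eq_cube)

lemma matrix_inv_mult:
  assumes "invertible (g::real^'n::finite^'n)"
  shows "matrix_inv g ** g = mat 1" "g ** matrix_inv g = mat 1"
proof -
  have "\<exists>A'. g ** A' = mat 1 \<and> A' ** g = mat 1"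
    using assms by (simp add: invertible_def)
  from someI_ex[OF this] show "matrix_inv g ** g = mat 1" "g ** matrix_inv g = mat 1"
    by (simp_all add: matrix_inv_def)
qed

lemma bodyOmega_mult: "invertible g \<Longrightarrow> bodyOmega g (g ** M) = M"
  by (simp add: bodyOmega_def matrix_mul_assoc matrix_inv_mult)

lemma rotation_matrix_invertible: "rotation_matrix (g::real^'n::finite^'n) \<Longrightarrow> invertible g"
  unfolding rotation_matrix_def orthogonal_matrix_def invertible_def by blast

lemma Qspace_invertible: "q \<in> Qspace \<Longrightarrow> invertible (snd q)"
  by (auto simp: Qspace_def rotation_matrix_invertible)

lemma horL_eq:
  assumes g: "invertible g" and i: "i \<noteq> lastI" and R: "R \<noteq> 0"
  shows "horL R i (x, g) = (axis i 1, g ** hor_omega R i)"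
  unfolding horL_def
proof (rule the_equality)
  show "(axis i 1, g ** hor_omega R i) \<in> distD R (x, g) \<and> fst (axis i 1, g ** hor_omega R i) = axis i 1"
    using i R
    by (auto simp: distD_def bodyOmega_mult[OF g] skew_def hor_omega_nth vec_eq_iff transpose_def
        matrix_vector_mult_def axis_def if_distrib cong: if_cong)
next
  fix v assume v: "v \<in> distD R (x, g) \<and> fst v = axis i 1"
  obtain xd gd where v_eq: "v = (xd, gd)" by (cases v)
  define W where "W = bodyOmega g gd"
  have xd: "xd = axis i 1" using v v_eq by simp
  have skew: "transpose W = - W" and roll: "xd = - R *s (W *v axis lastI 1)"
    and no_spin: "\<And>\<mu> \<nu>. \<mu> \<noteq> lastI \<Longrightarrow> \<nu> \<noteq> lastI \<Longrightarrow> W $ \<mu> $ \<nu> = 0"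
    using v v_eq by (simp_all add: distD_def W_def skew_def)
  have last_col: "W $ r $ lastI = - (if r = i then 1 else 0) / R" for r
  proof -
    have "xd $ r = - R * W $ r $ lastI"
      using roll by (simp add: matrix_vector_mult_def axis_def if_distrib cong: if_cong)
    then show ?thesis using R xd by (simp add: axis_def field_simps)
  qed
  have last_row: "W $ lastI $ c = - W $ c $ lastI" for c
  proof -
    have "W $ c $ lastI = - W $ lastI $ c"
      using arg_cong[OF skew, of "\<lambda>A. A $ lastI $ c"] by (simp add: transpose_def)
    then show ?thesis by simp
  qed
  have "W $ r $ c = hor_omega R i $ r $ c" for r c
  proof (cases "c = lastI")
    case True
    then show ?thesis using last_col[of r] i by (auto simp: hor_omega_nth)
  next
    case c: False
    show ?thesis
    proof (cases "r = lastI")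
      case True
      then show ?thesis using last_row[of c] last_col[of c] c i by (auto simp: hor_omega_nth)
    next
      case False
      then show ?thesis using no_spin c by (simp add: hor_omega_nth)
    qed
  qed
  then have "W = hor_omega R i"
    by (simp add: vec_eq_iff)
  then have "gd = g ** hor_omega R i"
    by (metis W_def bodyOmega_def g matrix_mul_assoc matrix_mul_lid matrix_inv_mult(2))
  then show "v = (axis i 1, g ** hor_omega R i)"
    using v_eq xd by simp
qed

lemma continuous_on_det: "continuous_on UNIV (\<lambda>A::real^'n::finite^'n. det A)"
  unfolding det_def by (intro continuous_intros)

lemma open_invertible_snd:
  "open {p::('a::topological_space \<times> ((real,'n::finite) vec,'n) vec). invertible (snd p)}"
proof -
  have "open {p::('a \<times> ((real,'n) vec,'n) vec). det (snd p) \<noteq> 0}"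
    by (intro open_Collect_neq continuous_intros continuous_on_compose2[OF continuous_on_det]) auto
  then show ?thesis
    by (simp add: invertible_det_nz)
qed

text \<open>Near an invertible \<open>g\<close> the lift is \<open>(x, g) \<mapsto> (E\<^sub>j, g \<Omega>\<^sub>j)\<close>,
  which is affine in \<open>g\<close>.\<close>

lemma horL_has_derivative:
  fixes j :: "'n::{finite,linorder}"
  assumes g: "invertible (snd p)" and j: "j \<noteq> lastI" and R: "R \<noteq> 0"
  shows "(horL R j has_derivative (\<lambda>v. (0, snd v ** hor_omega R j))) (at p)"
proof (rule has_derivative_transform_within_open[OF _ open_invertible_snd])
  have "linear (\<lambda>v::(real,'n) vec \<times> ((real,'n) vec,'n) vec. snd v ** hor_omega R j)"
    by (rule linearI) (simp_all add: matrix_add_rdistrib scalar_matrix_assoc)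
  then show "((\<lambda>v. (axis j 1, snd v ** hor_omega R j)) has_derivative (\<lambda>v. (0, snd v ** hor_omega R j))) (at p)"
    by (intro has_derivative_Pair has_derivative_const linear_imp_has_derivative)
  show "p \<in> {p. invertible (snd p)}"
    using g by simp
  show "(axis j 1, snd y ** hor_omega R j) = horL R j y" if "y \<in> {p. invertible (snd p)}" for y
    using that horL_eq[of "snd y" j R "fst y"] j R by simp
qed

lemma lie_bracket_horL:
  assumes g: "invertible g" and i: "i \<noteq> lastI" and j: "j \<noteq> lastI" and R: "R \<noteq> 0"
  shows "lie_bracket (horL R i) (horL R j) (x, g) = (0, g ** hor_bracket R i j)"
proof -
  have "frechet_derivative (horL R k) (at (x, g)) = (\<lambda>v. (0, snd v ** hor_omega R k))"
    if "k \<noteq> lastI" for k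
    using frechet_derivative_at[OF horL_has_derivative[of "(x, g)" k R]] g that R by simp
  then show ?thesis
    unfolding lie_bracket_def horL_eq[OF g i R] horL_eq[OF g j R] using i j
    by (simp add: hor_bracket_def matrix_diff_ldistrib matrix_mul_assoc)
qed

lemma Kmat_diag:
  assumes g: "invertible g" and k: "k \<noteq> lastI" and l: "l \<noteq> lastI" and R: "R \<noteq> 0"
  shows "Kmat R a m (diag_mat d) (x, g) k l
     = (if k = l then (d k + d lastI + m * a^2) / R^2 else 0) + m / R^2 * x$k * x$l"
  unfolding Kmat_def horL_eq[OF g k R] horL_eq[OF g l R] kmetric_eq
  by (simp only: bodyOmega_mult[OF g] fst_conv snd_conv inner_hor_velocity[OF k l R]
      kappa_inertia_diag_hor_omega[OF k l R])
     (simp add: algebra_simps add_divide_distrib)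

lemma kmetric_bracket_horL_diag:
  assumes g: "invertible g" and i: "i \<noteq> lastI" and j: "j \<noteq> lastI" and l: "l \<noteq> lastI"
    and R: "R \<noteq> 0"
  shows "kmetric R a m (diag_mat d) (x, g) (lie_bracket (horL R i) (horL R j) (x, g)) (horL R l (x, g))
     = m * ((if l = i then a * x$j / R^3 else 0) - (if l = j then a * x$i / R^3 else 0))"
  unfolding lie_bracket_horL[OF g i j R] horL_eq[OF g l R] kmetric_eq
  using i j l R
  by (simp add: bodyOmega_mult[OF g] kappa_inertia_diag_hor_bracket inner_hor_bracket_hor_velocity)

lemma left_inverse_eq_right_inverse_on:
  fixes M M' K :: "'a \<Rightarrow> 'a \<Rightarrow> real"
  assumes fin: "finite S" and k: "k \<in> S" and j: "j \<in> S"
    and left: "\<And>k j. k \<in> S \<Longrightarrow> j \<in> S \<Longrightarrow> (\<Sum>l\<in>S. M k l * K l j) = (if k = j then 1 else 0)"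
    and right: "\<And>l j. l \<in> S \<Longrightarrow> j \<in> S \<Longrightarrow> (\<Sum>p\<in>S. K l p * M' p j) = (if l = j then 1 else 0)"
  shows "M k j = M' k j"
proof -
  have "M k j = (\<Sum>l\<in>S. M k l * (if l = j then 1 else 0))"
    using fin j by (simp add: if_distrib cong: if_cong)
  also have "\<dots> = (\<Sum>l\<in>S. M k l * (\<Sum>p\<in>S. K l p * M' p j))"
    using right j by (intro sum.cong) auto
  also have "\<dots> = (\<Sum>p\<in>S. (\<Sum>l\<in>S. M k l * K l p) * M' p j)"
  proof -
    have "(\<Sum>l\<in>S. M k l * (\<Sum>p\<in>S. K l p * M' p j)) = (\<Sum>l\<in>S. \<Sum>p\<in>S. M k l * K l p * M' p j)"
      by (simp add: sum_distrib_left mult.assoc)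
    also have "\<dots> = (\<Sum>p\<in>S. \<Sum>l\<in>S. M k l * K l p * M' p j)"
      by (rule sum.swap)
    finally show ?thesis
      by (simp add: sum_distrib_right)
  qed
  also have "\<dots> = (\<Sum>p\<in>S. if p = k then M' p j else 0)"
    using left k by (intro sum.cong) auto
  also have "\<dots> = M' k j"
    using fin k by simp
  finally show ?thesis .
qed

lemma Kinv_eqI:
  assumes outside: "\<And>k l. k \<notin> shapeI \<or> l \<notin> shapeI \<Longrightarrow> M k l = 0"
    and left: "\<And>k j. k \<in> shapeI \<Longrightarrow> j \<in> shapeI \<Longrightarrow>
        (\<Sum>l\<in>shapeI. M k l * Kmat R a m J q l j) = (if k = j then 1 else 0)"
    and right: "\<And>l j. l \<in> shapeI \<Longrightarrow> j \<in> shapeI \<Longrightarrow>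
        (\<Sum>p\<in>shapeI. Kmat R a m J q l p * M p j) = (if l = j then 1 else 0)"
  shows "Kinv R a m J q = M"
  unfolding Kinv_def
proof (rule the_equality)
  show "(\<forall>k l. (k \<notin> shapeI \<or> l \<notin> shapeI) \<longrightarrow> M k l = 0) \<and>
      (\<forall>k\<in>shapeI. \<forall>j\<in>shapeI. (\<Sum>l\<in>shapeI. M k l * Kmat R a m J q l j) = (if k = j then 1 else 0))"
    using outside left by blast
  fix M' assume M': "(\<forall>k l. (k \<notin> shapeI \<or> l \<notin> shapeI) \<longrightarrow> M' k l = 0) \<and>
      (\<forall>k\<in>shapeI. \<forall>j\<in>shapeI. (\<Sum>l\<in>shapeI. M' k l * Kmat R a m J q l j) = (if k = j then 1 else 0))"
  show "M' = M"
  proof (intro ext)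
    fix k j
    show "M' k j = M k j"
    proof (cases "k \<in> shapeI \<and> j \<in> shapeI")
      case True
      then show ?thesis
        using left_inverse_eq_right_inverse_on[of shapeI k j M' "Kmat R a m J q" M] M' right by auto
    qed (use M' outside in auto)
  qed
qed

text \<open>Sherman--Morrison for \<open>\<alpha> I + \<beta> x x\<^sup>T\<close>.\<close>

lemma rank_one_update_left_inverse:
  fixes x :: "'a \<Rightarrow> real"
  assumes fin: "finite S" and k: "k \<in> S" and j: "j \<in> S" and \<alpha>: "\<alpha> \<noteq> 0"
    and D: "\<alpha> + \<beta> * (\<Sum>l\<in>S. x l * x l) \<noteq> 0"
  shows "(\<Sum>l\<in>S. ((if k = l then 1/\<alpha> else 0) - \<beta> * x k * x l / (\<alpha> * (\<alpha> + \<beta> * (\<Sum>l\<in>S. x l * x l))))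
            * ((if l = j then \<alpha> else 0) + \<beta> * x l * x j)) = (if k = j then 1 else 0)"
proof -
  define s where "s = (\<Sum>l\<in>S. x l * x l)"
  define D' where "D' = \<alpha> + \<beta> * s"
  have D': "D' \<noteq> 0" using D by (simp add: D'_def s_def)
  define C where "C = \<beta> * \<beta> * x k * x j / (\<alpha> * D')"
  have "(\<Sum>l\<in>S. ((if k = l then 1/\<alpha> else 0) - \<beta> * x k * x l / (\<alpha> * D'))
            * ((if l = j then \<alpha> else 0) + \<beta> * x l * x j))
     = (\<Sum>l\<in>S. (if l = k then (1/\<alpha>) * ((if k = j then \<alpha> else 0) + \<beta> * x k * x j) else 0)
          - (if l = j then \<beta> * x k * x j / D' else 0) - C * (x l * x l))"
    using \<alpha> D' unfolding C_def by (intro sum.cong) (auto simp: field_simps)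
  also have "\<dots> = (1/\<alpha>) * ((if k = j then \<alpha> else 0) + \<beta> * x k * x j) - \<beta> * x k * x j / D' - C * s"
    using fin k j by (simp add: sum_subtractf sum_distrib_left[symmetric] s_def)
  also have "\<dots> = (if k = j then 1 else 0)"
  proof -
    have "1/\<alpha> - 1/D' = \<beta> * s / (\<alpha> * D')"
      using \<alpha> D' by (simp add: D'_def field_simps)
    then have "\<beta> * x k * x j * (1/\<alpha>) - \<beta> * x k * x j / D' = C * s"
      by (simp add: C_def right_diff_distrib[symmetric, of "\<beta> * x k * x j"] algebra_simps)
    then show ?thesis
      using \<alpha> by (auto simp: algebra_simps)
  qed
  finally show ?thesis
    by (simp add: s_def D'_def)
qed

lemma Kinv_rank_one_update:
  fixes x :: "'n::{finite,linorder} \<Rightarrow> real"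
  assumes K: "\<And>l p. l \<in> shapeI \<Longrightarrow> p \<in> shapeI \<Longrightarrow>
      Kmat R a m J q l p = (if l = p then \<alpha> else 0) + \<beta> * x l * x p"
    and \<alpha>: "\<alpha> \<noteq> 0" and D: "\<alpha> + \<beta> * (\<Sum>l\<in>shapeI. x l * x l) \<noteq> 0"
  shows "Kinv R a m J q = (\<lambda>k l. if k \<in> shapeI \<and> l \<in> shapeI
      then (if k = l then 1/\<alpha> else 0) - \<beta> * x k * x l / (\<alpha> * (\<alpha> + \<beta> * (\<Sum>l\<in>shapeI. x l * x l)))
      else 0)" (is "_ = ?M")
proof (rule Kinv_eqI)
  show left: "(\<Sum>l\<in>shapeI. ?M k l * Kmat R a m J q l j) = (if k = j then 1 else 0)"
    if "k \<in> shapeI" "j \<in> shapeI" for k j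
    using rank_one_update_left_inverse[of shapeI k j \<alpha> \<beta> x] that \<alpha> D
    by (simp add: K cong: sum.cong)
  show "(\<Sum>p\<in>shapeI. Kmat R a m J q l p * ?M p j) = (if l = j then 1 else 0)"
    if "l \<in> shapeI" "j \<in> shapeI" for l j
  proof -
    have "(\<Sum>p\<in>shapeI. Kmat R a m J q l p * ?M p j) = (\<Sum>p\<in>shapeI. ?M j p * Kmat R a m J q p l)"
      using that by (intro sum.cong refl) (simp add: K algebra_simps)
    then show ?thesis
      using left[of j l] that by simp
  qed
qed auto

lemma gyro_diag:
  assumes q: "q \<in> Qspace" and i: "i \<in> shapeI" and j: "j \<in> shapeI" and R: "R \<noteq> 0"
  shows "gyro R a m (diag_mat d) q i j k
    = m * a / R^3 * (Kinv R a m (diag_mat d) q k i * fst q $ j - Kinv R a m (diag_mat d) q k j * fst q $ i)"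
proof -
  obtain x g where q_eq: "q = (x, g)" by (cases q)
  have g: "invertible g"
    using Qspace_invertible q q_eq by force
  have shape: "l \<in> shapeI \<longleftrightarrow> l \<noteq> lastI" for l
    by (simp add: shapeI_def)
  let ?K = "Kinv R a m (diag_mat d) q"
  have "gyro R a m (diag_mat d) q i j k
      = (\<Sum>l\<in>shapeI. ?K k l * (m * ((if l = i then a * x$j / R^3 else 0) - (if l = j then a * x$i / R^3 else 0))))"
    unfolding gyro_def q_eq using i j
    by (intro sum.cong refl) (simp add: kmetric_bracket_horL_diag[OF g _ _ _ R] shape)
  also have "\<dots> = (\<Sum>l\<in>shapeI. (if l = i then ?K k i * (m * (a * x$j / R^3)) else 0)
                     - (if l = j then ?K k j * (m * (a * x$i / R^3)) else 0))"
    by (intro sum.cong refl) (auto simp: algebra_simps)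
  also have "\<dots> = ?K k i * (m * (a * x$j / R^3)) - ?K k j * (m * (a * x$i / R^3))"
    using i j by (simp add: sum_subtractf)
  finally show ?thesis
    using q_eq by (simp add: algebra_simps)
qed

lemma Kinv_axisymmetric:
  fixes q :: "(real,'n::{finite,linorder}) vec \<times> ((real,'n) vec,'n) vec"
  assumes q: "q \<in> Qspace" and k: "k \<in> shapeI" and l: "l \<in> shapeI"
    and R: "R \<noteq> 0" and m: "m \<ge> 0" and C: "C > 0" and C_eq: "C = J1 + Jn + m * a^2"
  shows "Kinv R a m (diag_mat (\<lambda>i. if i = lastI then Jn else J1)) q k l
    = R^2 / C * ((if k = l then 1 else 0)
                 - m * fst q $ k * fst q $ l / (C + m * (\<Sum>p\<in>shapeI. fst q $ p * fst q $ p)))"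
proof -
  obtain x g where q_eq: "q = (x, g)" by (cases q)
  have g: "invertible g"
    using Qspace_invertible q q_eq by force
  define s where "s = (\<Sum>p\<in>shapeI. x $ p * x $ p)"
  define D where "D = C + m * s"
  have "s \<ge> 0"
    unfolding s_def by (simp add: sum_nonneg)
  then have D: "D > 0"
    using C m by (simp add: D_def add_pos_nonneg)
  have "Kmat R a m (diag_mat (\<lambda>i. if i = lastI then Jn else J1)) q l p
      = (if l = p then C / R^2 else 0) + m / R^2 * x $ l * x $ p"
    if "l \<in> shapeI" "p \<in> shapeI" for l p
    using that unfolding q_eq C_eq by (simp add: Kmat_diag[OF g _ _ R] shapeI_def)
  moreover have "C / R^2 + m / R^2 * s = D / R^2"
    by (simp add: D_def add_divide_distrib)
  ultimately have "Kinv R a m (diag_mat (\<lambda>i. if i = lastI then Jn else J1)) q k l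
      = (if k = l then 1 / (C / R^2) else 0) - m / R^2 * x $ k * x $ l / (C / R^2 * (D / R^2))"
    using Kinv_rank_one_update[of R a m _ q "C / R^2" "m / R^2" "\<lambda>l. x $ l"] k l R C D
    by (simp add: s_def)
  also have "\<dots> = R^2 / C * ((if k = l then 1 else 0) - m * x $ k * x $ l / D)"
    using R C D by (simp add: field_simps)
  finally show ?thesis
    using q_eq by (simp add: s_def D_def)
qed

lemma gyro_axisymmetric:
  fixes q :: "(real,'n::{finite,linorder}) vec \<times> ((real,'n) vec,'n) vec"
  assumes q: "q \<in> Qspace" and i: "i \<in> shapeI" and j: "j \<in> shapeI" and k: "k \<in> shapeI"
    and R: "R \<noteq> 0" and m: "m \<ge> 0" and pos: "J1 + Jn + m * a^2 > 0"
  shows "gyro R a m (diag_mat (\<lambda>i. if i = lastI then Jn else J1)) q i j k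
    = (- m * a) / (R * (J1 + Jn + m * a^2)) *
      (fst q $ i * (if j = k then 1 else 0) - fst q $ j * (if i = k then 1 else 0))"
proof -
  obtain C where C_eq: "C = J1 + Jn + m * a^2" and C: "C > 0"
    using pos by blast
  let ?J = "diag_mat (\<lambda>i::'n. if i = lastI then Jn else J1)" and ?x = "fst q"
  let ?D = "C + m * (\<Sum>p\<in>shapeI. ?x $ p * ?x $ p)"
  have "gyro R a m ?J q i j k = m * a / R^3 * (Kinv R a m ?J q k i * ?x $ j - Kinv R a m ?J q k j * ?x $ i)"
    by (rule gyro_diag[OF q i j R])
  also have "\<dots> = m * a / R^3 * (R^2 / C * ((if k = i then ?x $ j else 0) - (if k = j then ?x $ i else 0)))"
  proof -
    have "m * ?x $ k * ?x $ i / ?D * ?x $ j = m * ?x $ k * ?x $ j / ?D * ?x $ i"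
      by (simp add: algebra_simps)
    then show ?thesis
      unfolding Kinv_axisymmetric[OF q k i R m C C_eq] Kinv_axisymmetric[OF q k j R m C C_eq]
      by (cases "k = i"; cases "k = j") (simp_all add: right_diff_distrib left_diff_distrib)
  qed
  also have "\<dots> = m * a / (R * C) * ((if k = i then ?x $ j else 0) - (if k = j then ?x $ i else 0))"
    using R C by (simp add: power2_eq_square power3_eq_cube field_simps)
  also have "\<dots> = (- m * a) / (R * C) * (?x $ i * (if j = k then 1 else 0) - ?x $ j * (if i = k then 1 else 0))"
  proof -
    have "(if k = i then ?x $ j else 0) - (if k = j then ?x $ i else 0)
        = - (?x $ i * (if j = k then 1 else 0) - ?x $ j * (if i = k then 1 else 0))"
      by auto
    then show ?thesis
      by simp
  qed
  finally show ?thesis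
    unfolding C_eq .
qed

theorem mainTheorem5:
  fixes R m :: real
  assumes n3: "CARD('n::{finite,linorder}) \<ge> 3"
    and R: "R > 0" and m: "m > 0"
  shows
    "(\<forall>(J::((real,'n) vec,'n) vec) (a::real) (Jd::'n \<Rightarrow> real).
        J = (\<chi> i j. if i = j then Jd i else 0) \<and> pos_def_sym J \<and> a = 0 \<longrightarrow>
        (\<forall>q\<in>Qspace. \<forall>i\<in>shapeI. \<forall>j\<in>shapeI. \<forall>k\<in>shapeI. gyro R a m J q i j k = 0))
   \<and> (\<forall>(J::((real,'n) vec,'n) vec) (a::real) (J1::real) (Jn::real).
        J = (\<chi> i j. if i = j then (if i = lastI then Jn else J1) else 0) \<and> pos_def_sym J \<longrightarrow>
        (\<forall>q\<in>Qspace. \<forall>i\<in>shapeI. \<forall>j\<in>shapeI. \<forall>k\<in>shapeI.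
           gyro R a m J q i j k =
             (- m * a) / (R * (J1 + Jn + m * a\<^sup>2)) *
             (fst q $ i * (if j = k then 1 else 0) - fst q $ j * (if i = k then 1 else 0))))"
proof (intro conjI allI impI ballI)
  fix J :: "((real,'n) vec,'n) vec" and a :: real and Jd :: "'n \<Rightarrow> real"
    and q :: "(real,'n) vec \<times> ((real,'n) vec,'n) vec" and i j k :: 'n
  assume J: "J = diag_mat Jd \<and> pos_def_sym J \<and> a = 0"
    and q: "q \<in> Qspace" and i: "i \<in> shapeI" and j: "j \<in> shapeI"
  have "gyro R 0 m (diag_mat Jd) q i j k = 0"
    using gyro_diag[OF q i j, of R 0 m Jd k] R by simp
  then show "gyro R a m J q i j k = 0"
    using J by simp
next
  fix J :: "((real,'n) vec,'n) vec" and a J1 Jn :: real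
    and q :: "(real,'n) vec \<times> ((real,'n) vec,'n) vec" and i j k :: 'n
  assume J: "J = diag_mat (\<lambda>i. if i = lastI then Jn else J1) \<and> pos_def_sym J"
    and q: "q \<in> Qspace" and i: "i \<in> shapeI" and j: "j \<in> shapeI" and k: "k \<in> shapeI"
  have pd: "pos_def_sym (diag_mat (\<lambda>i::'n. if i = lastI then Jn else J1))"
    using J by auto
  have "i \<noteq> lastI"
    using i by (simp add: shapeI_def)
  then have "J1 > 0"
    using pos_def_sym_diag_pos[OF pd, of i] by simp
  moreover have "Jn > 0"
    using pos_def_sym_diag_pos[OF pd, of lastI] by simp
  ultimately have "J1 + Jn + m * a\<^sup>2 > 0"
    using m by (simp add: add_pos_nonneg)
  then show "gyro R a m J q i j k = (- m * a) / (R * (J1 + Jn + m * a\<^sup>2)) *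
      (fst q $ i * (if j = k then 1 else 0) - fst q $ j * (if i = k then 1 else 0))"
    using gyro_axisymmetric[OF q i j k] J R m by simp
qed

end
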